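(* Let $J:=\operatorname{conv}\{\mathbf{v}_0,\mathbf{v}_1,\dots,\mathbf{v}_d\}\subset\mathbb{R}^d_{\ge0}\setminus\{\mathbf{0}\}$ be a $d$-simplex and let $f$ be $q$-homogeneous ($q\ge1$) and convex on $\operatorname{conv}(J\cup\{\mathbf{0}\})$. Then $$\operatorname{vol}(P^0(f,J))-\operatorname{vol}(P(f,J))=\frac{q-1}{(q+d+1)(d+2)}\int_J f(\mathbf{x})\,d\mathbf{x}.$$
   Context: $f$ is $q$-homogeneous if $f(\lambda\mathbf{x})=\lambda^q f(\mathbf{x})$ for all $\lambda\ge0$ (in particular $f(\mathbf{0})=0$). Let $\mu$ be the unique affine function agreeing with $f$ at the vertices of $J$ and $\mu(\mathbf{x},z):=z\mu(\mathbf{x}/z)$ (extended linearly in $(\mathbf{x},z)$). For $z\ge0$, $z\cdot J:=\{z\mathbf{x}:\mathbf{x}\in J\}$. Perspective relaxation: $P(f,J):=\operatorname{cl}\{(\mathbf{x},y,z):\mu(\mathbf{x},z)\ge y\ge zf(\mathbf{x}/z),\ \mathbf{x}\in z\cdot J,\ 1\ge z>0\}$. Naive relaxation: $P^0(f,J):=\{(\mathbf{x},y,z):\mu(\mathbf{x},z)\ge y\ge f(\mathbf{x}),\ \mathbf{x}\in z\cdot J,\ 1\ge z\ge0\}$, both in $\mathbb{R}^d\times\mathbb{R}\times\mathbb{R}$. $\operatorname{vol}$ is $(d+2)$-dimensional Lebesgue measure. *)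

theory Defs
  imports "HOL-Analysis.Analysis"
begin

text \<open>The affine interpolant mu(x) = a \<bullet> x + c of f at the vertices of J is given by
  its coefficients a, c; its homogenisation is mu(x,z) = a \<bullet> x + c * z.\<close>

definition q_homogeneous :: "real \<Rightarrow> ('a::real_vector \<Rightarrow> real) \<Rightarrow> bool" where
  "q_homogeneous q f \<longleftrightarrow> (\<forall>t x. t \<ge> 0 \<longrightarrow> f (t *\<^sub>R x) = t powr q * f x)"

definition persp_relax ::
  "('a::euclidean_space \<Rightarrow> real) \<Rightarrow> 'a set \<Rightarrow> 'a \<Rightarrow> real \<Rightarrow> ('a \<times> real \<times> real) set" where
  "persp_relax f J a c = closure {(x, y, z). a \<bullet> x + c * z \<ge> y \<and> y \<ge> z * f (x /\<^sub>R z)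
      \<and> x \<in> (\<lambda>u. z *\<^sub>R u) ` J \<and> 0 < z \<and> z \<le> 1}"

definition naive_relax ::
  "('a::euclidean_space \<Rightarrow> real) \<Rightarrow> 'a set \<Rightarrow> 'a \<Rightarrow> real \<Rightarrow> ('a \<times> real \<times> real) set" where
  "naive_relax f J a c = {(x, y, z). a \<bullet> x + c * z \<ge> y \<and> y \<ge> f x
      \<and> x \<in> (\<lambda>u. z *\<^sub>R u) ` J \<and> 0 \<le> z \<and> z \<le> 1}"

end

theory Submission
  imports Defs
begin

(*
  Away from a null set (the slices z = 0 and z = 1 and the cone over the boundary of J),
  both relaxations live over the open cone of points (z u, y, z) with u in the interior of J
  and 0 < z < 1.  There homogeneity turns the naive lower bound f x into z^q f (x/z), while the
  closure in the perspective relaxation adds nothing because f is continuous on the interior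
  of J; so the two relaxations are cone_relax with weights z^q and z.  For q = 1 these agree.
  For q > 1 convexity and f 0 = 0 give f >= 0 on J, so the difference of the two relaxations
  is the region z^q f u <= y < z f u over the cone.  By Fubini and the substitution x = z u
  its volume is (integral of f over J) * (integral over (0,1) of z^d (z - z^q)), and the
  latter integral is 1/(d+2) - 1/(q+d+1).
*)

lemma measure_eq_Int_if_negligible_Diff:
  assumes "A \<inter> C \<in> sets lebesgue" and "negligible (A - C)"
  shows "measure lebesgue A = measure lebesgue (A \<inter> C)"
proof -
  have "A = (A \<inter> C) \<union> (A - C)" by blast
  then show ?thesis
    using assms measure_Un_null_set negligible_iff_null_sets by metis
qed

lemma negligible_Times_UNIV:
  fixes A :: "'a::euclidean_space set"
  assumes "negligible A" and "A \<in> sets borel"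
  shows "negligible (A \<times> (UNIV :: 'b::euclidean_space set))"
proof -
  have "A \<in> null_sets lborel"
    using assms by (simp add: negligible_iff_null_sets null_sets_completion_iff)
  then have "A \<times> (UNIV :: 'b set) \<in> null_sets (lborel \<Otimes>\<^sub>M lborel)"
    using sets.top[of "lborel :: 'b measure"] by (intro lborel.times_in_null_sets1) simp_all
  then show ?thesis
    by (simp add: lborel_prod negligible_iff_null_sets null_sets_completionI)
qed

lemma isCont_le_on_closure:
  fixes g :: "'a::metric_space \<Rightarrow> real"
  assumes "isCont g p" and "p \<in> closure A" and "\<And>q. q \<in> A \<Longrightarrow> g q \<le> b"
  shows "g p \<le> b"
proof -
  obtain s where s: "\<And>n. s n \<in> A" and "s \<longlonglongrightarrow> p"
    using \<open>p \<in> closure A\<close> closure_sequential by metis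
  then have "(\<lambda>n. g (s n)) \<longlonglongrightarrow> g p"
    using \<open>isCont g p\<close> isCont_tendsto_compose by blast
  then show ?thesis
    using assms(3)[OF s] by (intro LIMSEQ_le_const2) auto
qed

lemma continuous_on_borel_measurable_extension:
  fixes f :: "'a::topological_space \<Rightarrow> 'b::real_normed_vector"
  assumes "J \<in> sets borel" and "continuous_on J f"
  obtains F where "F \<in> borel_measurable borel" and "\<And>u. u \<in> J \<Longrightarrow> F u = f u"
proof
  show "(\<lambda>u. indicator J u *\<^sub>R f u) \<in> borel_measurable borel"
    using assms by (rule borel_measurable_continuous_on_indicator)
qed simp

lemma integrable_on_continuous_bounded:
  fixes f :: "'a::euclidean_space \<Rightarrow> real"
  assumes "S \<in> sets lebesgue" "bounded S" "continuous_on S f" "\<And>x. x \<in> S \<Longrightarrow> \<bar>f x\<bar> \<le> B"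
  shows "f integrable_on S"
proof (rule measurable_bounded_by_integrable_imp_integrable_real)
  show "f \<in> borel_measurable (lebesgue_on S)"
    using assms by (intro continuous_imp_measurable_on_sets_lebesgue)
  show "(\<lambda>_. B) integrable_on S"
    using assms by (intro integrable_on_const bounded_set_imp_lmeasurable)
qed (use assms in auto)

lemma integral_interior:
  fixes f :: "'a::euclidean_space \<Rightarrow> 'b::banach"
  assumes "negligible (frontier S)"
  shows "integral (interior S) f = integral S f"
  using interior_subset closure_subset
  by (intro integral_spike_set negligible_subset[OF assms]) (auto simp: frontier_def)

lemma nn_integral_lborel_scaleR:
  fixes h :: "'a::euclidean_space \<Rightarrow> ennreal"
  assumes [measurable]: "h \<in> borel_measurable borel" and "c \<noteq> 0"
  shows "(\<integral>\<^sup>+x. h x \<partial>lborel) = ennreal (\<bar>c\<bar> ^ DIM('a)) * (\<integral>\<^sup>+x. h (c *\<^sub>R x) \<partial>lborel)"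
  by (subst lborel_affine[OF \<open>c \<noteq> 0\<close>, of 0])
    (simp add: nn_integral_density nn_integral_distr nn_integral_cmult)

lemma emeasure_between_graphs:
  fixes W :: "('a::euclidean_space \<times> real) set" and lo hi :: "'a \<Rightarrow> real \<Rightarrow> real"
  assumes W[measurable]: "W \<in> sets (lborel \<Otimes>\<^sub>M lborel)"
    and lo: "(\<lambda>w. lo (fst w) (snd w)) \<in> borel_measurable (lborel \<Otimes>\<^sub>M lborel)"
    and hi: "(\<lambda>w. hi (fst w) (snd w)) \<in> borel_measurable (lborel \<Otimes>\<^sub>M lborel)"
    and le: "\<And>x z. (x, z) \<in> W \<Longrightarrow> lo x z \<le> hi x z"
  shows "emeasure lborel {(x, y, z). (x, z) \<in> W \<and> lo x z \<le> y \<and> y < hi x z}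
    = (\<integral>\<^sup>+x. \<integral>\<^sup>+z. ennreal (hi x z - lo x z) * indicator W (x, z) \<partial>lborel \<partial>lborel)"
    (is "emeasure lborel ?D = _")
proof -
  have "(\<lambda>p. (fst p, snd (snd p))) \<in> lborel \<Otimes>\<^sub>M lborel \<Otimes>\<^sub>M lborel \<rightarrow>\<^sub>M lborel \<Otimes>\<^sub>M lborel"
    by measurable
  from measurable_compose[OF this lo] measurable_compose[OF this hi]
  have [measurable]: "(\<lambda>p. lo (fst p) (snd (snd p))) \<in> borel_measurable (lborel \<Otimes>\<^sub>M lborel \<Otimes>\<^sub>M lborel)"
    "(\<lambda>p. hi (fst p) (snd (snd p))) \<in> borel_measurable (lborel \<Otimes>\<^sub>M lborel \<Otimes>\<^sub>M lborel)"
    by simp_all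
  have "Measurable.pred (lborel \<Otimes>\<^sub>M lborel \<Otimes>\<^sub>M lborel :: ('a \<times> real \<times> real) measure)
      (\<lambda>p. (fst p, snd (snd p)) \<in> W \<and> lo (fst p) (snd (snd p)) \<le> fst (snd p)
        \<and> fst (snd p) < hi (fst p) (snd (snd p)))"
    by measurable
  then have D: "?D \<in> sets (lborel \<Otimes>\<^sub>M lborel \<Otimes>\<^sub>M lborel)"
    by (simp add: pred_def space_pair_measure case_prod_beta')
  have "emeasure lborel ?D = emeasure (lborel \<Otimes>\<^sub>M (lborel :: (real \<times> real) measure)) ?D"
    by (simp only: lborel_prod)
  also have "\<dots> = (\<integral>\<^sup>+x. \<integral>\<^sup>+w. indicator ?D (x, w) \<partial>(lborel :: (real \<times> real) measure) \<partial>lborel)"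
    using D by (intro lborel.emeasure_pair_measure) (simp only: lborel_prod)
  also have "\<dots> = (\<integral>\<^sup>+x. \<integral>\<^sup>+z. \<integral>\<^sup>+y. indicator ?D (x, y, z) \<partial>lborel \<partial>lborel \<partial>lborel)"
  proof (intro nn_integral_cong)
    fix x :: 'a
    have "(\<lambda>w. indicator ?D (x, w) :: ennreal) \<in> borel_measurable (lborel \<Otimes>\<^sub>M lborel)"
      using D by measurable
    then show "(\<integral>\<^sup>+w. indicator ?D (x, w) \<partial>lborel) = (\<integral>\<^sup>+z. \<integral>\<^sup>+y. indicator ?D (x, y, z) \<partial>lborel \<partial>lborel)"
      by (subst lborel_prod[symmetric], subst lborel_pair.nn_integral_snd[symmetric]) simp_all
  qed
  also have "\<dots> = (\<integral>\<^sup>+x. \<integral>\<^sup>+z. ennreal (hi x z - lo x z) * indicator W (x, z) \<partial>lborel \<partial>lborel)"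
  proof (intro nn_integral_cong)
    fix x z
    have "(\<lambda>y. indicator ?D (x, y, z)) = (\<lambda>y. indicator W (x, z) * indicator {lo x z ..< hi x z} y :: ennreal)"
      by (auto simp: indicator_def)
    then show "(\<integral>\<^sup>+y. indicator ?D (x, y, z) \<partial>lborel) = ennreal (hi x z - lo x z) * indicator W (x, z)"
      using le[of x z] by (cases "(x, z) \<in> W") (auto simp: nn_integral_cmult_indicator)
  qed
  finally show ?thesis .
qed

lemma has_integral_power_mult_powr:
  fixes q :: real assumes "0 \<le> q"
  shows "((\<lambda>z. z ^ d * z powr q) has_integral 1 / (q + d + 1)) {0<..<1}"
proof -
  have "((\<lambda>z. z powr (q + d)) has_integral 1 / (q + d + 1)) {0..1}"
    using has_integral_powr_from_0[of "q + d" 1] assms by simp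
  moreover have "z powr (q + d) = z ^ d * z powr q" if "0 \<le> z" for z :: real
    using that by (cases "z = 0") (auto simp: powr_add powr_realpow)
  ultimately have "((\<lambda>z. z ^ d * z powr q) has_integral 1 / (q + d + 1)) {0..1}"
    by (rule has_integral_eq[rotated]) simp
  then show ?thesis
    by (metis box_real(1) cbox_interval has_integral_open_interval)
qed

lemma has_integral_power_mult_diff_powr:
  fixes q :: real assumes "0 \<le> q"
  shows "((\<lambda>z. z ^ d * (z - z powr q)) has_integral 1 / (d + 2) - 1 / (q + d + 1)) {0<..<1}"
proof -
  have "((\<lambda>z. z ^ d * z powr 1 - z ^ d * z powr q) has_integral 1 / (1 + real d + 1) - 1 / (q + d + 1))
      {0<..<1}"
    by (rule has_integral_diff[OF has_integral_power_mult_powr has_integral_power_mult_powr[OF assms]])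
      simp
  then have "((\<lambda>z. z ^ d * (z - z powr q)) has_integral 1 / (1 + real d + 1) - 1 / (q + d + 1))
      {0<..<1}"
    by (rule has_integral_eq[rotated]) (auto simp: algebra_simps)
  then show ?thesis
    by (simp add: add_ac)
qed

lemma q_homogeneous_convex_on_nonneg:
  assumes hom: "q_homogeneous q f" and "1 < q" and conv: "convex_on S f" and "0 \<in> S" "u \<in> S"
  shows "0 \<le> f u"
proof -
  have "f 0 = 0"
    using hom[unfolded q_homogeneous_def, rule_format, of 0 0] by simp
  then have "f ((1 - 1/2) *\<^sub>R 0 + (1/2) *\<^sub>R u) \<le> (1/2) * f u"
    using convex_onD[OF conv, of "1/2" 0 u] assms(4,5) by simp
  moreover have "f ((1/2) *\<^sub>R u) = (1/2) powr q * f u"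
    using hom by (simp add: q_homogeneous_def)
  ultimately have "0 \<le> (1/2 - (1/2) powr q) * f u"
    by (simp add: algebra_simps)
  moreover have "(1/2 :: real) powr q < (1/2) powr 1"
    using \<open>1 < q\<close> by (intro powr_less_mono') auto
  ultimately show ?thesis
    by (simp add: zero_le_mult_iff)
qed

lemma convex_on_le_affine_interpolant:
  fixes a :: "'a::real_inner"
  assumes "convex_on (convex hull V) f" and "\<forall>v\<in>V. f v = a \<bullet> v + c" and "x \<in> convex hull V"
  shows "f x \<le> a \<bullet> x + c"
proof -
  have "concave_on (convex hull V) (\<lambda>x. a \<bullet> x + c)"
    by (auto simp: concave_on_iff inner_add_right algebra_simps simp flip: distrib_right)
  then have "convex_on (convex hull V) (\<lambda>x. f x - (a \<bullet> x + c))"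
    by (rule convex_on_diff[OF assms(1)])
  then show ?thesis
    using convex_on_convex_hull_bound[of V "\<lambda>x. f x - (a \<bullet> x + c)" 0] assms(2,3) by simp
qed

lemma bounded_affine_upper_bound:
  fixes a :: "'a::real_inner"
  assumes "bounded J"
  obtains B where "\<And>u. u \<in> J \<Longrightarrow> a \<bullet> u + c \<le> B"
proof -
  obtain R where R: "\<And>u. u \<in> J \<Longrightarrow> norm u \<le> R"
    using assms bounded_iff by metis
  have "a \<bullet> u + c \<le> norm a * R + c" if "u \<in> J" for u
    using norm_cauchy_schwarz[of a u] mult_left_mono[OF R[OF that], of "norm a"] by simp
  then show ?thesis
    using that by blast
qed

definition truncated_cone :: "'a::real_vector set \<Rightarrow> ('a \<times> real) set" where
  "truncated_cone J = {(x, z). 0 < z \<and> z < 1 \<and> x /\<^sub>R z \<in> J}"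

lemma sets_truncated_cone [measurable]:
  fixes J :: "'a::euclidean_space set"
  assumes [measurable]: "J \<in> sets borel"
  shows "truncated_cone J \<in> sets (lborel \<Otimes>\<^sub>M lborel)"
proof -
  have "Measurable.pred (lborel \<Otimes>\<^sub>M lborel :: ('a \<times> real) measure)
      (\<lambda>w. 0 < snd w \<and> snd w < 1 \<and> fst w /\<^sub>R snd w \<in> J)"
    by measurable
  then show ?thesis
    by (simp add: pred_def space_pair_measure truncated_cone_def case_prod_beta')
qed

lemma nn_integral_truncated_cone:
  fixes f :: "'a::euclidean_space \<Rightarrow> real" and k :: "real \<Rightarrow> real"
  assumes J[measurable]: "J \<in> sets borel" and f[measurable]: "f \<in> borel_measurable borel"
    and f_nonneg: "\<And>u. u \<in> J \<Longrightarrow> 0 \<le> f u" and I: "(f has_integral I) J"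
    and k[measurable]: "k \<in> borel_measurable borel" and k_nonneg: "\<And>z. 0 < z \<Longrightarrow> z < 1 \<Longrightarrow> 0 \<le> k z"
    and r: "((\<lambda>z. z ^ DIM('a) * k z) has_integral r) {0<..<1}"
  shows "(\<integral>\<^sup>+x. \<integral>\<^sup>+z. ennreal (k z * f (x /\<^sub>R z)) * indicator (truncated_cone J) (x, z) \<partial>lborel \<partial>lborel)
    = ennreal (I * r)"
proof -
  have I_nonneg: "0 \<le> I"
    using has_integral_nonneg[OF I] f_nonneg by blast
  have "(\<lambda>w. ennreal (k (snd w) * f (fst w /\<^sub>R snd w)) * indicator (truncated_cone J) w)
      \<in> borel_measurable (lborel \<Otimes>\<^sub>M lborel)"
    by measurable
  then have "(\<integral>\<^sup>+x. \<integral>\<^sup>+z. ennreal (k z * f (x /\<^sub>R z)) * indicator (truncated_cone J) (x, z) \<partial>lborel \<partial>lborel)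
      = (\<integral>\<^sup>+z. \<integral>\<^sup>+x. ennreal (k z * f (x /\<^sub>R z)) * indicator (truncated_cone J) (x, z) \<partial>lborel \<partial>lborel)"
    by (subst lborel_pair.Fubini') (simp_all add: case_prod_beta')
  also have "\<dots> = (\<integral>\<^sup>+z. ennreal (I * (z ^ DIM('a) * k z)) * indicator {0<..<1} z \<partial>lborel)"
  proof (intro nn_integral_cong)
    fix z :: real
    show "(\<integral>\<^sup>+x. ennreal (k z * f (x /\<^sub>R z)) * indicator (truncated_cone J) (x, z) \<partial>lborel)
      = ennreal (I * (z ^ DIM('a) * k z)) * indicator {0<..<1} z"
    proof (cases "0 < z \<and> z < 1")
      case True
      then have "(\<integral>\<^sup>+x. ennreal (k z * f (x /\<^sub>R z)) * indicator (truncated_cone J) (x, z) \<partial>lborel)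
          = ennreal (z ^ DIM('a)) * (\<integral>\<^sup>+u. ennreal (k z) * (ennreal (f u) * indicator J u) \<partial>lborel)"
        using k_nonneg[of z] by (subst nn_integral_lborel_scaleR[where c = z])
          (auto simp: truncated_cone_def indicator_def ennreal_mult' mult.assoc)
      also have "\<dots> = ennreal (z ^ DIM('a)) * (ennreal (k z) * ennreal I)"
        by (simp add: nn_integral_cmult nn_integral_has_integral_lebesgue'[OF f_nonneg I])
      also have "\<dots> = ennreal (I * (z ^ DIM('a) * k z))"
        using True k_nonneg[of z] I_nonneg by (simp add: ennreal_mult[symmetric] mult_ac)
      finally show ?thesis
        using True by simp
    qed (auto simp: truncated_cone_def)
  qed
  also have "\<dots> = ennreal (I * r)"
    using k_nonneg I_nonneg
    by (intro nn_integral_has_integral_lebesgue' has_integral_mult_right r) auto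
  finally show ?thesis .
qed

lemma emeasure_between_cone_graphs:
  fixes f :: "'a::euclidean_space \<Rightarrow> real" and g h :: "real \<Rightarrow> real"
  assumes J: "J \<in> sets borel" and f_cont: "continuous_on J f"
    and f_nonneg: "\<And>u. u \<in> J \<Longrightarrow> 0 \<le> f u" and I: "(f has_integral I) J"
    and [measurable]: "g \<in> borel_measurable borel" "h \<in> borel_measurable borel"
    and gh: "\<And>z. 0 < z \<Longrightarrow> z < 1 \<Longrightarrow> g z \<le> h z"
    and r: "((\<lambda>z. z ^ DIM('a) * (h z - g z)) has_integral r) {0<..<1}"
  shows "emeasure lborel {(x, y, z). (x, z) \<in> truncated_cone J
      \<and> g z * f (x /\<^sub>R z) \<le> y \<and> y < h z * f (x /\<^sub>R z)} = ennreal (I * r)"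
proof -
  obtain F where [measurable]: "F \<in> borel_measurable borel" and Ff: "\<And>u. u \<in> J \<Longrightarrow> F u = f u"
    using continuous_on_borel_measurable_extension[OF J f_cont] by blast
  note J[measurable]
  have "{(x, y, z). (x, z) \<in> truncated_cone J \<and> g z * f (x /\<^sub>R z) \<le> y \<and> y < h z * f (x /\<^sub>R z)}
      = {(x, y, z). (x, z) \<in> truncated_cone J \<and> g z * F (x /\<^sub>R z) \<le> y \<and> y < h z * F (x /\<^sub>R z)}"
    by (auto simp: truncated_cone_def Ff)
  also have "emeasure lborel \<dots>
      = (\<integral>\<^sup>+x. \<integral>\<^sup>+z. ennreal (h z * F (x /\<^sub>R z) - g z * F (x /\<^sub>R z)) * indicator (truncated_cone J) (x, z)
          \<partial>lborel \<partial>lborel)"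
  proof (rule emeasure_between_graphs)
    show "g z * F (x /\<^sub>R z) \<le> h z * F (x /\<^sub>R z)" if "(x, z) \<in> truncated_cone J" for x z
      using that f_nonneg gh by (auto simp: truncated_cone_def Ff intro!: mult_right_mono)
  qed measurable
  also have "\<dots> = (\<integral>\<^sup>+x. \<integral>\<^sup>+z. ennreal ((h z - g z) * F (x /\<^sub>R z)) * indicator (truncated_cone J) (x, z)
          \<partial>lborel \<partial>lborel)"
    by (simp add: left_diff_distrib)
  also have "\<dots> = ennreal (I * r)"
    using f_nonneg gh I r
    by (intro nn_integral_truncated_cone) (auto simp: Ff cong: has_integral_cong)
  finally show ?thesis .
qed

definition cone_slab :: "'a::real_vector set \<Rightarrow> ('a \<times> real \<times> real) set" where
  "cone_slab J = {(x, y, z). x \<in> (\<lambda>u. z *\<^sub>R u) ` J \<and> 0 \<le> z \<and> z \<le> 1}"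

lemma closed_cone_slab:
  fixes J :: "'a::euclidean_space set"
  assumes "compact J"
  shows "closed (cone_slab J)"
proof -
  let ?Q = "(\<lambda>(u, z). (z *\<^sub>R u, z)) ` (J \<times> {0..1::real})"
  have Q: "compact ?Q"
    using assms by (intro compact_continuous_image compact_Times compact_Icc)
      (auto intro!: continuous_intros simp: case_prod_beta')
  have "continuous_on UNIV (\<lambda>p :: 'a \<times> real \<times> real. (fst p, snd (snd p)))"
    by (intro continuous_intros)
  from closed_vimage[OF compact_imp_closed[OF Q] this]
  have "closed ((\<lambda>p :: 'a \<times> real \<times> real. (fst p, snd (snd p))) -` ?Q)" .
  moreover have "cone_slab J = (\<lambda>p. (fst p, snd (snd p))) -` ?Q"
    by (force simp: cone_slab_def)
  ultimately show ?thesis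
    by simp
qed

lemma negligible_cone_slab_Diff:
  fixes J :: "'a::euclidean_space set"
  assumes "negligible (frontier J)"
  shows "negligible (cone_slab J - {(x, y, z). (x, z) \<in> truncated_cone (interior J)})"
proof -
  let ?e = "(0, 0, 1) :: 'a \<times> real \<times> real"
  let ?\<Phi> = "\<lambda>p :: 'a \<times> real \<times> real. (snd (snd p) *\<^sub>R fst p, snd p)"
  have "?e \<noteq> 0"
    by (simp add: zero_prod_def)
  then have "negligible {p. ?e \<bullet> p = 0}" "negligible {p. ?e \<bullet> p = 1}"
    by (auto intro: negligible_hyperplane)
  moreover have "negligible (?\<Phi> ` (frontier J \<times> UNIV))"
  proof (rule negligible_differentiable_image_negligible)
    show "negligible (frontier J \<times> (UNIV :: (real \<times> real) set))"
      using assms by (intro negligible_Times_UNIV) auto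
    have "(?\<Phi> has_derivative (\<lambda>h. (snd (snd p) *\<^sub>R fst h + snd (snd h) *\<^sub>R fst p, snd h))) (at p within S)"
      for p :: "'a \<times> real \<times> real" and S
      by (auto intro!: derivative_eq_intros)
    then show "?\<Phi> differentiable_on frontier J \<times> UNIV"
      unfolding differentiable_on_def differentiable_def by blast
  qed simp
  moreover have cover: "cone_slab J - {(x, y, z). (x, z) \<in> truncated_cone (interior J)}
      \<subseteq> {p. ?e \<bullet> p = 0} \<union> {p. ?e \<bullet> p = 1} \<union> ?\<Phi> ` (frontier J \<times> UNIV)"
  proof
    fix p assume "p \<in> cone_slab J - {(x, y, z). (x, z) \<in> truncated_cone (interior J)}"
    then obtain u y z where p: "p = (z *\<^sub>R u, y, z)" and u: "u \<in> J" and z: "0 \<le> z" "z \<le> 1"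
      and notin: "(z *\<^sub>R u, z) \<notin> truncated_cone (interior J)"
      by (auto simp: cone_slab_def)
    show "p \<in> {p. ?e \<bullet> p = 0} \<union> {p. ?e \<bullet> p = 1} \<union> ?\<Phi> ` (frontier J \<times> UNIV)"
    proof (cases "z = 0 \<or> z = 1")
      case False
      then have "u \<notin> interior J"
        using notin z by (auto simp: truncated_cone_def)
      then have "u \<in> frontier J"
        using u closure_subset by (auto simp: frontier_def)
      moreover have "p = ?\<Phi> (u, y, z)"
        by (simp add: p)
      ultimately show ?thesis
        by blast
    next
      case True
      then have "?e \<bullet> p = 0 \<or> ?e \<bullet> p = 1"
        by (auto simp: p)
      then show ?thesis
        by blast
    qed
  qed
  ultimately show ?thesis
    by (intro negligible_subset[OF _ cover] negligible_Un)
qed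

definition cone_relax ::
  "(real \<Rightarrow> real) \<Rightarrow> ('a::real_inner \<Rightarrow> real) \<Rightarrow> 'a set \<Rightarrow> 'a \<Rightarrow> real \<Rightarrow> ('a \<times> real \<times> real) set" where
  "cone_relax w f J a c = {(x, y, z). (x, z) \<in> truncated_cone J
      \<and> w z * f (x /\<^sub>R z) \<le> y \<and> y \<le> a \<bullet> x + c * z}"

lemma cone_relax_cong:
  assumes "\<And>u. u \<in> J \<Longrightarrow> f u = g u"
  shows "cone_relax w f J a c = cone_relax w g J a c"
  using assms by (auto simp: cone_relax_def truncated_cone_def)

lemma sets_cone_relax:
  fixes f :: "'a::euclidean_space \<Rightarrow> real"
  assumes J: "J \<in> sets borel" and f: "continuous_on J f" and [measurable]: "w \<in> borel_measurable borel"
  shows "cone_relax w f J a c \<in> sets lborel"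
proof -
  obtain F where [measurable]: "F \<in> borel_measurable borel" and Ff: "\<And>u. u \<in> J \<Longrightarrow> F u = f u"
    using continuous_on_borel_measurable_extension[OF J f] by blast
  note J[measurable]
  have "Measurable.pred (lborel \<Otimes>\<^sub>M lborel \<Otimes>\<^sub>M lborel :: ('a \<times> real \<times> real) measure)
      (\<lambda>p. (fst p, snd (snd p)) \<in> truncated_cone J \<and> w (snd (snd p)) * F (fst p /\<^sub>R snd (snd p)) \<le> fst (snd p)
        \<and> fst (snd p) \<le> a \<bullet> fst p + c * snd (snd p))"
    by measurable
  moreover have "cone_relax w F J a c = {p \<in> space (lborel \<Otimes>\<^sub>M lborel \<Otimes>\<^sub>M lborel).
      (fst p, snd (snd p)) \<in> truncated_cone J \<and> w (snd (snd p)) * F (fst p /\<^sub>R snd (snd p)) \<le> fst (snd p)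
        \<and> fst (snd p) \<le> a \<bullet> fst p + c * snd (snd p)}"
    by (auto simp: cone_relax_def space_pair_measure)
  ultimately have "cone_relax w F J a c \<in> sets lborel"
    unfolding pred_def by (simp only: lborel_prod)
  then show ?thesis
    using cone_relax_cong[of J F f w a c] Ff by simp
qed

lemma bounded_cone_relax:
  fixes f :: "'a::euclidean_space \<Rightarrow> real"
  assumes "bounded J" and w: "\<And>z. 0 < z \<Longrightarrow> z < 1 \<Longrightarrow> 0 \<le> w z"
    and f: "\<And>u. u \<in> J \<Longrightarrow> 0 \<le> f u"
  shows "bounded (cone_relax w f J a c)"
proof -
  obtain R where R: "\<And>u. u \<in> J \<Longrightarrow> norm u \<le> R"
    using assms bounded_iff by metis
  obtain B where B: "\<And>u. u \<in> J \<Longrightarrow> a \<bullet> u + c \<le> B"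
    using bounded_affine_upper_bound[OF \<open>bounded J\<close>] by metis
  have "cone_relax w f J a c \<subseteq> cball 0 R \<times> ({0..max 0 B} \<times> {0..1})"
  proof safe
    fix x y z assume p: "(x, y, z) \<in> cone_relax w f J a c"
    then have z: "0 < z" "z < 1" and u: "x /\<^sub>R z \<in> J"
      and y: "w z * f (x /\<^sub>R z) \<le> y" "y \<le> a \<bullet> x + c * z"
      by (auto simp: cone_relax_def truncated_cone_def)
    have "norm x = z * norm (x /\<^sub>R z)"
      using z by simp
    also have "\<dots> \<le> 1 * R"
      using z R[OF u] by (intro mult_mono) auto
    finally show "x \<in> cball 0 R"
      by simp
    have "0 \<le> y"
      using y(1) w[OF z] f[OF u] by (meson mult_nonneg_nonneg order_trans)
    have "a \<bullet> x + c * z = z * (a \<bullet> (x /\<^sub>R z) + c)"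
      using z by (simp add: algebra_simps)
    also have "\<dots> \<le> max 0 (a \<bullet> (x /\<^sub>R z) + c)"
      using z by (cases "0 \<le> a \<bullet> (x /\<^sub>R z) + c") (auto simp: mult_left_le_one_le mult_nonneg_nonpos)
    finally show "y \<in> {0..max 0 B}"
      using \<open>0 \<le> y\<close> y(2) B[OF u] by auto
    show "z \<in> {0..1}"
      using z by simp
  qed
  then show ?thesis
    by (rule bounded_subset[rotated]) (intro bounded_Times bounded_cball bounded_closed_interval)
qed

lemma cone_relax_Diff:
  assumes "\<And>u. u \<in> J \<Longrightarrow> f u \<le> a \<bullet> u + c"
  shows "cone_relax g f J a c - cone_relax (\<lambda>z. z) f J a c
    = {(x, y, z). (x, z) \<in> truncated_cone J \<and> g z * f (x /\<^sub>R z) \<le> y \<and> y < z * f (x /\<^sub>R z)}"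
proof -
  have "z * f (x /\<^sub>R z) \<le> a \<bullet> x + c * z" if "(x, z) \<in> truncated_cone J" for x z
  proof -
    have "0 < z" "x /\<^sub>R z \<in> J"
      using that by (auto simp: truncated_cone_def)
    then have "z * f (x /\<^sub>R z) \<le> z * (a \<bullet> (x /\<^sub>R z) + c)"
      using assms[of "x /\<^sub>R z"] by (intro mult_left_mono) auto
    also have "\<dots> = a \<bullet> x + c * z"
      using \<open>0 < z\<close> by (simp add: algebra_simps)
    finally show ?thesis .
  qed
  then show ?thesis
    by (fastforce simp: cone_relax_def)
qed

lemma measure_cone_relax_diff:
  fixes f :: "'a::euclidean_space \<Rightarrow> real" and g :: "real \<Rightarrow> real"
  assumes J: "open J" "bounded J"
    and f: "continuous_on J f" and f_nonneg: "\<And>u. u \<in> J \<Longrightarrow> 0 \<le> f u"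
    and f_le: "\<And>u. u \<in> J \<Longrightarrow> f u \<le> a \<bullet> u + c"
    and g: "g \<in> borel_measurable borel" and g_bounds: "\<And>z. 0 < z \<Longrightarrow> z < 1 \<Longrightarrow> 0 \<le> g z \<and> g z \<le> z"
    and r: "((\<lambda>z. z ^ DIM('a) * (z - g z)) has_integral r) {0<..<1}"
  shows "measure lebesgue (cone_relax g f J a c) - measure lebesgue (cone_relax (\<lambda>z. z) f J a c)
    = integral J f * r"
proof -
  let ?N = "cone_relax g f J a c" and ?S = "cone_relax (\<lambda>z. z) f J a c"
  obtain B where "\<And>u. u \<in> J \<Longrightarrow> a \<bullet> u + c \<le> B"
    using bounded_affine_upper_bound[OF J(2)] by metis
  then have "f integrable_on J"
    using J f f_nonneg f_le
    by (intro integrable_on_continuous_bounded[where B = B]) (auto intro: order_trans)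
  then have I: "(f has_integral integral J f) J"
    by (rule integrable_integral)
  have sets: "?N \<in> sets lborel" "?S \<in> sets lborel"
    using sets_cone_relax[OF borel_open[OF J(1)] f] g by auto
  have sub: "?S \<subseteq> ?N"
    using f_nonneg g_bounds
    by (auto simp: cone_relax_def truncated_cone_def intro: order_trans[OF mult_right_mono])
  have "emeasure lborel {(x, y, z). (x, z) \<in> truncated_cone J
      \<and> g z * f (x /\<^sub>R z) \<le> y \<and> y < z * f (x /\<^sub>R z)} = ennreal (integral J f * r)"
    using J(1) f f_nonneg I g g_bounds r by (intro emeasure_between_cone_graphs) auto
  then have "emeasure lborel (?N - ?S) = ennreal (integral J f * r)"
    by (simp only: cone_relax_Diff[OF f_le])
  moreover have "0 \<le> integral J f * r"
    using has_integral_nonneg[OF I] has_integral_nonneg[OF r] f_nonneg g_bounds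
    by (simp add: mult_nonneg_nonneg)
  ultimately have "measure lborel (?N - ?S) = integral J f * r"
    by (simp add: measure_def)
  moreover have "emeasure lborel ?N \<noteq> \<infinity>"
    using bounded_cone_relax[OF J(2)] g_bounds f_nonneg emeasure_bounded_finite by (metis less_irrefl)
  ultimately show ?thesis
    using measure_Diff[OF _ sets sub] sets by simp
qed

lemma naive_relax_subset_cone_slab: "naive_relax f J a c \<subseteq> cone_slab J"
  by (auto simp: naive_relax_def cone_slab_def)

lemma naive_relax_Int_cone:
  assumes "q_homogeneous q f" and "J0 \<subseteq> J"
  shows "naive_relax f J a c \<inter> {(x, y, z). (x, z) \<in> truncated_cone J0} = cone_relax (\<lambda>z. z powr q) f J0 a c"
proof -
  have "x \<in> (\<lambda>u. z *\<^sub>R u) ` J \<and> f x = z powr q * f (x /\<^sub>R z)" if "0 < z" "x /\<^sub>R z \<in> J0" for x z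
  proof -
    have "x = z *\<^sub>R (x /\<^sub>R z)"
      using that by simp
    then show ?thesis
      using that assms by (metis image_eqI less_imp_le q_homogeneous_def subsetD)
  qed
  then show ?thesis
    by (auto simp: naive_relax_def cone_relax_def truncated_cone_def)
qed

lemma measure_naive_relax:
  fixes f :: "'a::euclidean_space \<Rightarrow> real"
  assumes hom: "q_homogeneous q f" and fr: "negligible (frontier J)" and f: "continuous_on (interior J) f"
  shows "measure lebesgue (naive_relax f J a c)
    = measure lebesgue (cone_relax (\<lambda>z. z powr q) f (interior J) a c)"
proof -
  have "negligible (naive_relax f J a c - {(x, y, z). (x, z) \<in> truncated_cone (interior J)})"
    by (rule negligible_subset[OF negligible_cone_slab_Diff[OF fr]])
      (use naive_relax_subset_cone_slab in blast)
  moreover have "cone_relax (\<lambda>z. z powr q) f (interior J) a c \<in> sets lebesgue"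
    using sets_cone_relax[OF _ f] by simp
  ultimately show ?thesis
    by (metis measure_eq_Int_if_negligible_Diff naive_relax_Int_cone[OF hom interior_subset])
qed

lemma persp_relax_subset_cone_slab:
  fixes J :: "'a::euclidean_space set"
  assumes "compact J"
  shows "persp_relax f J a c \<subseteq> cone_slab J"
  unfolding persp_relax_def
  by (rule closure_minimal[OF _ closed_cone_slab[OF assms]]) (auto simp: cone_slab_def)

lemma persp_relax_Int_cone:
  fixes f :: "'a::euclidean_space \<Rightarrow> real"
  assumes "open J0" and "J0 \<subseteq> J" and f: "continuous_on J0 f"
  shows "persp_relax f J a c \<inter> {(x, y, z). (x, z) \<in> truncated_cone J0} = cone_relax (\<lambda>z. z) f J0 a c"
proof
  show "cone_relax (\<lambda>z. z) f J0 a c \<subseteq> persp_relax f J a c \<inter> {(x, y, z). (x, z) \<in> truncated_cone J0}"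
  proof
    fix p assume "p \<in> cone_relax (\<lambda>z. z) f J0 a c"
    then obtain x y z where p: "p = (x, y, z)" and cone: "(x, z) \<in> truncated_cone J0"
      and y: "z * f (x /\<^sub>R z) \<le> y" "y \<le> a \<bullet> x + c * z"
      by (auto simp: cone_relax_def)
    then have z: "0 < z" "z < 1" and "x /\<^sub>R z \<in> J"
      using \<open>J0 \<subseteq> J\<close> by (auto simp: truncated_cone_def)
    then have "x \<in> (\<lambda>u. z *\<^sub>R u) ` J"
      by (intro image_eqI[where x = "x /\<^sub>R z"]) auto
    then have "p \<in> persp_relax f J a c"
      unfolding persp_relax_def using p y z by (intro closure_subset[THEN subsetD]) simp
    then show "p \<in> persp_relax f J a c \<inter> {(x, y, z). (x, z) \<in> truncated_cone J0}"
      using p cone by simp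
  qed
next
  show "persp_relax f J a c \<inter> {(x, y, z). (x, z) \<in> truncated_cone J0} \<subseteq> cone_relax (\<lambda>z. z) f J0 a c"
  proof safe
    fix x y z
    assume p: "(x, y, z) \<in> persp_relax f J a c" and cone: "(x, z) \<in> truncated_cone J0"
    then have z: "0 < z" and u: "x /\<^sub>R z \<in> J0"
      by (auto simp: truncated_cone_def)
    let ?g = "\<lambda>(x, y, z). z * f (x /\<^sub>R z) - y" and ?h = "\<lambda>(x, y, z). y - (a \<bullet> x + c * z)"
    have "isCont (\<lambda>p. fst p /\<^sub>R snd (snd p)) (x, y, z)"
      using z by (intro continuous_intros) auto
    moreover have "isCont f ((\<lambda>p. fst p /\<^sub>R snd (snd p)) (x, y, z))"
      using f u \<open>open J0\<close> continuous_on_eq_continuous_at by fastforce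
    ultimately have "isCont (\<lambda>p. f (fst p /\<^sub>R snd (snd p))) (x, y, z)"
      by (rule isCont_o2)
    then have "isCont ?g (x, y, z)"
      unfolding case_prod_beta' by (intro continuous_intros)
    then have "?g (x, y, z) \<le> 0"
      using p unfolding persp_relax_def by (rule isCont_le_on_closure) auto
    moreover have "?h (x, y, z) \<le> 0"
      using p unfolding persp_relax_def
      by (rule isCont_le_on_closure[rotated]) (auto simp: case_prod_beta' intro!: continuous_intros)
    ultimately show "(x, y, z) \<in> cone_relax (\<lambda>z. z) f J0 a c"
      using cone by (simp add: cone_relax_def)
  qed
qed

lemma measure_persp_relax:
  fixes f :: "'a::euclidean_space \<Rightarrow> real"
  assumes "compact J" and fr: "negligible (frontier J)" and f: "continuous_on (interior J) f"
  shows "measure lebesgue (persp_relax f J a c) = measure lebesgue (cone_relax (\<lambda>z. z) f (interior J) a c)"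
proof -
  have "negligible (persp_relax f J a c - {(x, y, z). (x, z) \<in> truncated_cone (interior J)})"
    by (rule negligible_subset[OF negligible_cone_slab_Diff[OF fr]])
      (use persp_relax_subset_cone_slab[OF \<open>compact J\<close>] in blast)
  moreover have "cone_relax (\<lambda>z. z) f (interior J) a c \<in> sets lebesgue"
    using sets_cone_relax[OF _ f] by simp
  ultimately show ?thesis
    by (metis measure_eq_Int_if_negligible_Diff persp_relax_Int_cone[OF _ interior_subset f] open_interior)
qed

lemma measure_naive_relax_minus_persp_relax:
  fixes f :: "'a::euclidean_space \<Rightarrow> real"
  assumes J: "compact J" "convex J" and "1 \<le> q" and hom: "q_homogeneous q f"
    and conv: "convex_on (convex hull (insert 0 J)) f" and f_le: "\<And>u. u \<in> J \<Longrightarrow> f u \<le> a \<bullet> u + c"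
  shows "measure lebesgue (naive_relax f J a c) - measure lebesgue (persp_relax f J a c)
    = integral J f * (1 / (real DIM('a) + 2) - 1 / (q + DIM('a) + 1))"
proof -
  have fr: "negligible (frontier J)"
    using J(2) by (rule negligible_convex_frontier)
  have "convex_on (interior J) f"
    using interior_subset[of J] hull_subset[of "insert 0 J" convex] J(2)
    by (intro convex_on_subset[OF conv]) (auto simp: convex_interior)
  then have f_cont: "continuous_on (interior J) f"
    by (intro convex_on_continuous) auto
  note relax = measure_naive_relax[OF hom fr f_cont] measure_persp_relax[OF J(1) fr f_cont]
  show ?thesis
  proof (cases "q = 1")
    case True
    then have "cone_relax (\<lambda>z. z powr q) f (interior J) a c = cone_relax (\<lambda>z. z) f (interior J) a c"
      by (auto simp: cone_relax_def truncated_cone_def)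
    then show ?thesis
      using relax True by simp
  next
    case False
    then have "1 < q"
      using \<open>1 \<le> q\<close> by simp
    have "0 \<le> f u" if "u \<in> J" for u
      by (rule q_homogeneous_convex_on_nonneg[OF hom \<open>1 < q\<close> conv])
        (use that in \<open>auto intro: hull_subset[THEN subsetD]\<close>)
    then have "measure lebesgue (cone_relax (\<lambda>z. z powr q) f (interior J) a c)
        - measure lebesgue (cone_relax (\<lambda>z. z) f (interior J) a c)
        = integral (interior J) f * (1 / (real DIM('a) + 2) - 1 / (q + DIM('a) + 1))"
      using f_le interior_subset \<open>1 < q\<close> compact_imp_bounded[OF J(1)]
      by (intro measure_cone_relax_diff[OF open_interior _ f_cont _ _ _ _
            has_integral_power_mult_diff_powr]) (auto simp: powr_le_one_le bounded_subset)
    then show ?thesis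
      using relax integral_interior[OF fr, of f] by simp
  qed
qed

theorem theorem10:
  fixes V :: "(real^'n) set" and f :: "real^'n \<Rightarrow> real" and q c :: real and a :: "real^'n"
  assumes "finite V" and "card V = CARD('n) + 1" and "\<not> affine_dependent V"
    and "\<forall>x\<in>convex hull V. (\<forall>i. 0 \<le> x $ i) \<and> x \<noteq> 0"
    and "q \<ge> 1" and "q_homogeneous q f"
    and "convex_on (convex hull (insert 0 (convex hull V))) f"
    and "\<forall>v\<in>V. f v = a \<bullet> v + c"
  shows "measure lebesgue (naive_relax f (convex hull V) a c)
           - measure lebesgue (persp_relax f (convex hull V) a c)
         = (q - 1) / ((q + real CARD('n) + 1) * (real CARD('n) + 2))
           * integral (convex hull V) f"
proof -
  have "compact (convex hull V)"
    using \<open>finite V\<close> by (simp add: compact_convex_hull finite_imp_compact)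
  moreover have "f u \<le> a \<bullet> u + c" if "u \<in> convex hull V" for u
    using convex_on_subset[OF assms(7)] assms(8) that
    by (intro convex_on_le_affine_interpolant) (auto intro: hull_subset[THEN subsetD])
  ultimately have "measure lebesgue (naive_relax f (convex hull V) a c)
      - measure lebesgue (persp_relax f (convex hull V) a c)
      = integral (convex hull V) f * (1 / (real CARD('n) + 2) - 1 / (q + CARD('n) + 1))"
    using measure_naive_relax_minus_persp_relax[OF _ convex_convex_hull \<open>q \<ge> 1\<close> assms(6,7)] by simp
  then show ?thesis
    using \<open>q \<ge> 1\<close> by (simp add: field_simps)
qed

end
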